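(* For every $(2,2)$-form $\alpha$ in $\mathbb C^4$ there exists a basis $\omega_1,\dots,\omega_4$ of $(\mathbb C^4)^\ast$ such that $$\alpha\wedge\omega_1\wedge\omega_2\wedge\bar\omega_1\wedge\bar\omega_j=\alpha\wedge\omega_1\wedge\omega_2\wedge\bar\omega_2\wedge\bar\omega_j=0\quad\text{for } j=3,4.$$
   Context: Forms are constant-coefficient forms on $\mathbb C^4$, i.e. elements of the exterior algebra generated by $(\mathbb C^4)^\ast$ and its complex conjugate; a $(2,2)$-form is a linear combination of wedge products of two $(1,0)$-forms and two $(0,1)$-forms. *)

theory Defs
  imports Complex_Main
begin

text \<open>Constant-coefficient forms on C^4: the exterior algebra over C on the 8 generators
  dz_0..dz_3 (index i) and dzbar_0..dzbar_3 (index 4+i). A form is given by its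
  coefficient function on increasing multi-indices, i.e. finite subsets of {0..<8}:
  the form is  sum_S  f S * e_S  with  e_S = e_{s1} wedge ... wedge e_{sk},  s1 < ... < sk.\<close>

type_synonym form = "nat set \<Rightarrow> complex"

definition inv_count :: "nat set \<Rightarrow> nat set \<Rightarrow> nat" where
  "inv_count S T = card {(s, t). s \<in> S \<and> t \<in> T \<and> t < s}"

text \<open>wedge product: e_S wedge e_T = 0 if S, T meet, else (-1)^inv e_(S union T)\<close>
definition wedge :: "form \<Rightarrow> form \<Rightarrow> form" where
  "wedge a b = (\<lambda>U. \<Sum>S\<in>Pow U. (-1) ^ inv_count S (U - S) * a S * b (U - S))"

definition dz :: "nat \<Rightarrow> form" where
  "dz i = (\<lambda>S. if S = {i} then 1 else 0)"

definition dzbar :: "nat \<Rightarrow> form" where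
  "dzbar i = (\<lambda>S. if S = {i + 4} then 1 else 0)"

text \<open>an element w of (C^4)^*, given by its coordinates w 0..w 3, as a (1,0)-form,
  and its complex conjugate as a (0,1)-form\<close>
definition form10 :: "(nat \<Rightarrow> complex) \<Rightarrow> form" where
  "form10 w = (\<lambda>S. \<Sum>i<4. w i * dz i S)"

definition form_conj :: "(nat \<Rightarrow> complex) \<Rightarrow> form" where
  "form_conj w = (\<lambda>S. \<Sum>i<4. cnj (w i) * dzbar i S)"

definition is_22_form :: "form \<Rightarrow> bool" where
  "is_22_form \<alpha> \<longleftrightarrow> (\<forall>S. \<alpha> S \<noteq> 0 \<longrightarrow>
      S \<subseteq> {0..<8} \<and> card (S \<inter> {0..<4}) = 2 \<and> card (S \<inter> {4..<8}) = 2)"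

definition is_basis4 :: "(nat \<Rightarrow> nat \<Rightarrow> complex) \<Rightarrow> bool" where
  "is_basis4 \<omega> \<longleftrightarrow>
     (\<forall>c::nat \<Rightarrow> complex. (\<forall>i<4. (\<Sum>k\<in>{1..4}. c k * \<omega> k i) = 0) \<longrightarrow> (\<forall>k\<in>{1..4}. c k = 0)) \<and>
     (\<forall>v::nat \<Rightarrow> complex. \<exists>c::nat \<Rightarrow> complex. \<forall>i<4. v i = (\<Sum>k\<in>{1..4}. c k * \<omega> k i))"

end

theory Submission
  imports Defs
begin

text \<open>
  Write \<alpha> \<and> \<omega>_a \<and> \<omega>_b \<and> conj \<omega>_u \<and> conj \<omega>_v = P(a, b; u, v) dV. The form P is linear in a, b and
  conjugate-linear in u, v, and its coefficient tensor is skew in both pairs of indices, so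
  P(a, b; u, u) = 0 and P(a, b; v, u) = - P(a, b; u, v). If P(\<omega>_1, \<omega>_2; \<omega>_1, \<omega>_2) \<noteq> 0 for some basis,
  subtracting suitable multiples of \<omega>_1 and \<omega>_2 from \<omega>_3 and \<omega>_4 makes P(\<omega>_1, \<omega>_2; \<omega>_i, \<omega>_j) vanish
  for i = 1, 2 and j = 3, 4. Otherwise P vanishes on all pairs (e_a + s e_c, e_b + t e_d), which start a basis
  when a, b, c, d are distinct, and polarization in s and t forces the coefficient tensor, hence P,
  to vanish; then every basis works.
\<close>

definition unit_form :: "nat \<Rightarrow> form" where
  "unit_form a = (\<lambda>S. if S = {a} then 1 else 0)"

definition one_form :: form where
  "one_form = (\<lambda>S. if S = {} then 1 else 0)"

definition wedge_sign :: "nat \<Rightarrow> nat set \<Rightarrow> complex" where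
  "wedge_sign a U = (-1) ^ card {t\<in>U. t < a}"

lemma inv_count_singleton: "inv_count {a} T = card {t\<in>T. t < a}"
proof -
  have "{(s, t). s \<in> {a} \<and> t \<in> T \<and> t < s} = Pair a ` {t\<in>T. t < a}" by auto
  then show ?thesis unfolding inv_count_def by (simp add: card_image inj_on_def)
qed

lemma wedge_unit_form:
  "wedge (unit_form a) \<beta> U = (if finite U \<and> a \<in> U then wedge_sign a U * \<beta> (U - {a}) else 0)"
proof (cases "finite U")
  case False
  then show ?thesis by (simp add: wedge_def)
next
  case True
  have "wedge (unit_form a) \<beta> U =
      (\<Sum>S\<in>Pow U. if S = {a} then (-1) ^ inv_count S (U - S) * \<beta> (U - S) else 0)"
    unfolding wedge_def unit_form_def by (rule sum.cong) auto
  also have "\<dots> = (if a \<in> U then (-1) ^ inv_count {a} (U - {a}) * \<beta> (U - {a}) else 0)"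
    using True by (simp add: sum.delta)
  also have "inv_count {a} (U - {a}) = card {t\<in>U. t < a}"
    by (simp add: inv_count_singleton) (metis Diff_iff less_irrefl singletonD)
  finally show ?thesis using True by (simp add: wedge_sign_def)
qed

lemma wedge_sign_swap:
  assumes "finite U" "a \<in> U" "b \<in> U" "b < a"
  shows "wedge_sign a U * wedge_sign b (U - {a}) = - (wedge_sign b U * wedge_sign a (U - {b}))"
proof -
  have "{t\<in>U. t < a} = insert b {t\<in>U - {b}. t < a}" using assms by auto
  then have "card {t\<in>U. t < a} = Suc (card {t\<in>U - {b}. t < a})"
    using assms by (simp add: card_insert_disjoint)
  moreover have "{t\<in>U - {a}. t < b} = {t\<in>U. t < b}" using assms by auto
  ultimately show ?thesis by (simp add: wedge_sign_def)
qed

lemma wedge_unit_form_anticommute: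
  "wedge (unit_form a) (wedge (unit_form b) \<beta>) = (\<lambda>U. - wedge (unit_form b) (wedge (unit_form a) \<beta>) U)"
proof
  fix U
  show "wedge (unit_form a) (wedge (unit_form b) \<beta>) U = - wedge (unit_form b) (wedge (unit_form a) \<beta>) U"
  proof (cases "a \<noteq> b \<and> finite U \<and> a \<in> U \<and> b \<in> U")
    case False
    then show ?thesis by (auto simp: wedge_unit_form)
  next
    case True
    have "wedge_sign a U * wedge_sign b (U - {a}) = - (wedge_sign b U * wedge_sign a (U - {b}))"
      using wedge_sign_swap[of U a b] wedge_sign_swap[of U b a] True by (cases "b < a") auto
    moreover have "U - {a} - {b} = U - {b} - {a}" by auto
    ultimately show ?thesis using True by (simp add: wedge_unit_form mult.assoc[symmetric])
  qed
qed

lemma wedge_unit_form_one_form: "wedge (unit_form a) one_form = unit_form a"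
proof
  fix U
  show "wedge (unit_form a) one_form U = unit_form a U"
  proof (cases "U = {a}")
    case True
    have "wedge_sign a {a} = 1"
    proof -
      have "{t\<in>{a}. t < a} = {}" by auto
      then show ?thesis by (simp only: wedge_sign_def card.empty power_0)
    qed
    with True show ?thesis unfolding wedge_unit_form by (simp add: one_form_def unit_form_def)
  next
    case False
    then have "a \<in> U \<Longrightarrow> U - {a} \<noteq> {}" by auto
    with False show ?thesis unfolding wedge_unit_form by (auto simp: one_form_def unit_form_def)
  qed
qed

lemma wedge_uminus_right: "wedge \<alpha> (\<lambda>T. - \<beta> T) = (\<lambda>U. - wedge \<alpha> \<beta> U)"
  by (simp add: fun_eq_iff wedge_def sum_negf[symmetric])

lemma wedge_sum_right:
  "wedge \<alpha> (\<lambda>T. \<Sum>x\<in>A. f x * \<beta> x T) = (\<lambda>U. \<Sum>x\<in>A. f x * wedge \<alpha> (\<beta> x) U)"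
  unfolding wedge_def fun_eq_iff
  by (simp add: sum_distrib_left sum.swap[of _ "Pow _"] mult_ac)

lemma wedge_sum_left:
  "wedge (\<lambda>S. \<Sum>x\<in>A. f x * \<alpha> x S) \<beta> = (\<lambda>U. \<Sum>x\<in>A. f x * wedge (\<alpha> x) \<beta> U)"
  unfolding wedge_def fun_eq_iff
  by (simp add: sum_distrib_left sum_distrib_right sum.swap[of _ "Pow _"] mult_ac)

section \<open>The coefficient tensor of a (2,2)-form\<close>

definition monomial22 :: "nat \<Rightarrow> nat \<Rightarrow> nat \<Rightarrow> nat \<Rightarrow> form" where
  "monomial22 i j k l =
     wedge (unit_form i) (wedge (unit_form j) (wedge (unit_form (k + 4)) (wedge (unit_form (l + 4)) one_form)))"

definition coeff22 :: "form \<Rightarrow> nat set \<Rightarrow> nat \<Rightarrow> nat \<Rightarrow> nat \<Rightarrow> nat \<Rightarrow> complex" where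
  "coeff22 \<alpha> U i j k l = wedge \<alpha> (monomial22 i j k l) U"

definition pairing ::
    "(nat \<Rightarrow> nat \<Rightarrow> nat \<Rightarrow> nat \<Rightarrow> complex) \<Rightarrow> (nat \<Rightarrow> complex) \<Rightarrow> (nat \<Rightarrow> complex) \<Rightarrow>
     (nat \<Rightarrow> complex) \<Rightarrow> (nat \<Rightarrow> complex) \<Rightarrow> complex" where
  "pairing c a b u v =
     (\<Sum>i<4. a i * (\<Sum>j<4. b j * (\<Sum>k<4. cnj (u k) * (\<Sum>l<4. cnj (v l) * c i j k l))))"

definition skew_tensor :: "(nat \<Rightarrow> nat \<Rightarrow> nat \<Rightarrow> nat \<Rightarrow> complex) \<Rightarrow> bool" where
  "skew_tensor c \<longleftrightarrow> (\<forall>i j k l. c i j k l = - c j i k l) \<and> (\<forall>i j k l. c i j k l = - c i j l k)"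

lemma wedge_form10_form_conj:
  "wedge \<alpha> (wedge (form10 a) (wedge (form10 b) (wedge (form_conj u) (form_conj v)))) U =
     pairing (coeff22 \<alpha> U) a b u v"
proof -
  have form10: "form10 w = (\<lambda>T. \<Sum>i<4. w i * unit_form i T)" for w
    by (simp add: form10_def dz_def unit_form_def)
  have form_conj: "form_conj w = (\<lambda>T. \<Sum>i<4. cnj (w i) * unit_form (i + 4) T)" for w
    by (simp add: form_conj_def dzbar_def unit_form_def)
  have form_conj_last: "form_conj w = (\<lambda>T. \<Sum>i<4. cnj (w i) * wedge (unit_form (i + 4)) one_form T)" for w
    by (simp add: form_conj wedge_unit_form_one_form)
  show ?thesis
    unfolding form10 form_conj[of u] form_conj_last[of v]
    by (simp only: wedge_sum_left wedge_sum_right pairing_def coeff22_def monomial22_def)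
qed

lemma skew_tensor_coeff22: "skew_tensor (coeff22 \<alpha> U)"
proof -
  have "monomial22 i j k l = (\<lambda>T. - monomial22 j i k l T)" for i j k l
    unfolding monomial22_def by (rule wedge_unit_form_anticommute)
  moreover have "monomial22 i j k l = (\<lambda>T. - monomial22 i j l k T)" for i j k l
    unfolding monomial22_def wedge_unit_form_anticommute[of "k + 4"] wedge_uminus_right ..
  ultimately show ?thesis
    unfolding skew_tensor_def coeff22_def by (metis (no_types) wedge_uminus_right)
qed

lemma monomial22_nonzero:
  assumes "monomial22 i j k l T \<noteq> 0"
  shows "T = {i, j, k + 4, l + 4}" "i \<noteq> j" "k \<noteq> l"
  using assms unfolding monomial22_def wedge_unit_form one_form_def by (auto split: if_splits)

lemma subset_of_card_Int_eq_2:
  fixes I S :: "nat set"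
  assumes "finite I" "card I = 4" "card (S \<inter> I) = 2" "p \<in> I" "q \<in> I" "p \<noteq> q" "p \<notin> S" "q \<notin> S"
  shows "I \<subseteq> S \<union> {p, q}"
proof -
  have "card ((S \<inter> I) \<union> {p, q}) = card I"
    using assms by (subst card_Un_disjoint) (auto intro: finite_subset)
  then have "(S \<inter> I) \<union> {p, q} = I"
    using assms by (intro card_subset_eq) auto
  then show ?thesis by blast
qed

lemma coeff22_eq_zero:
  assumes "is_22_form \<alpha>" "U \<noteq> {0..<8}" "i < 4" "j < 4" "k < 4" "l < 4"
  shows "coeff22 \<alpha> U i j k l = 0"
  unfolding coeff22_def wedge_def
proof (rule sum.neutral, rule ballI, rule ccontr)
  fix S assume "S \<in> Pow U" and "(-1) ^ inv_count S (U - S) * \<alpha> S * monomial22 i j k l (U - S) \<noteq> 0"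
  then have "S \<subseteq> U" and "\<alpha> S \<noteq> 0" and "monomial22 i j k l (U - S) \<noteq> 0" by auto
  then have S: "S \<subseteq> {0..<8}" "card (S \<inter> {0..<4}) = 2" "card (S \<inter> {4..<8}) = 2"
    and T: "U - S = {i, j, k + 4, l + 4}" and "i \<noteq> j" "k \<noteq> l"
    using assms(1) monomial22_nonzero[of i j k l "U - S"] unfolding is_22_form_def by blast+
  have U: "U = S \<union> {i, j, k + 4, l + 4}" using T \<open>S \<subseteq> U\<close> by blast
  have "i \<notin> S" "j \<notin> S" "k + 4 \<notin> S" "l + 4 \<notin> S" using T by auto
  then have "{0..<4} \<subseteq> U" "{4..<8} \<subseteq> U"
    using subset_of_card_Int_eq_2[of "{0..<4}" S i j] subset_of_card_Int_eq_2[of "{4..<8}" S "k + 4" "l + 4"]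
      S \<open>i \<noteq> j\<close> \<open>k \<noteq> l\<close> assms(3-6) U by auto
  moreover have "U \<subseteq> {0..<8}" using S(1) U assms(3-6) by auto
  moreover have "{0..<8::nat} = {0..<4} \<union> {4..<8}" by auto
  ultimately show False using assms(2) by blast
qed

lemma pairing_eq_zero:
  assumes "\<And>i j k l. i < 4 \<Longrightarrow> j < 4 \<Longrightarrow> k < 4 \<Longrightarrow> l < 4 \<Longrightarrow> C i j k l = 0"
  shows "pairing C a b u v = 0"
  using assms by (simp add: pairing_def)

lemma wedge_22_form_form10_form_conj:
  assumes "is_22_form \<alpha>"
  shows "wedge \<alpha> (wedge (form10 a) (wedge (form10 b) (wedge (form_conj u) (form_conj v)))) =
    (\<lambda>U. if U = {0..<8} then pairing (coeff22 \<alpha> {0..<8}) a b u v else 0)"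
proof
  fix U
  show "wedge \<alpha> (wedge (form10 a) (wedge (form10 b) (wedge (form_conj u) (form_conj v)))) U =
      (if U = {0..<8} then pairing (coeff22 \<alpha> {0..<8}) a b u v else 0)"
    unfolding wedge_form10_form_conj
    using pairing_eq_zero[OF coeff22_eq_zero[OF assms]] by (cases "U = {0..<8}") simp_all
qed

section \<open>The sesquilinear pairing\<close>

lemma pairing_add_arg1: "pairing c (\<lambda>i. a i + s * a' i) b u v = pairing c a b u v + s * pairing c a' b u v"
  by (simp add: pairing_def algebra_simps sum.distrib sum_distrib_left)

lemma pairing_add_arg2: "pairing c a (\<lambda>j. b j + s * b' j) u v = pairing c a b u v + s * pairing c a b' u v"
  by (simp add: pairing_def algebra_simps sum.distrib sum_distrib_left)

lemma pairing_add_arg3: "pairing c a b (\<lambda>k. u k + s * u' k) v = pairing c a b u v + cnj s * pairing c a b u' v"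
  by (simp add: pairing_def algebra_simps sum.distrib sum_distrib_left)

lemma pairing_add_arg4:
  "pairing c a b u (\<lambda>l. v l + p * w l) = pairing c a b u v + cnj p * pairing c a b u w"
  by (simp add: pairing_def distrib_left distrib_right sum.distrib sum_distrib_left mult_ac)

lemma pairing_swap_conj:
  assumes "skew_tensor c"
  shows "pairing c a b v u = - pairing c a b u v"
proof -
  have "(\<Sum>k<4. cnj (v k) * (\<Sum>l<4. cnj (u l) * c i j k l)) =
      - (\<Sum>k<4. cnj (u k) * (\<Sum>l<4. cnj (v l) * c i j k l))" for i j
  proof -
    have "(\<Sum>k<4. cnj (v k) * (\<Sum>l<4. cnj (u l) * c i j k l)) =
        (\<Sum>l<4. \<Sum>k<4. cnj (v k) * (cnj (u l) * c i j k l))"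
      unfolding sum_distrib_left by (rule sum.swap)
    also have "\<dots> = (\<Sum>l<4. \<Sum>k<4. - (cnj (u l) * (cnj (v k) * c i j l k)))"
      using assms unfolding skew_tensor_def by (intro sum.cong refl) (metis mult.left_commute mult_minus_right)
    finally show ?thesis by (simp add: sum_distrib_left sum_negf)
  qed
  then show ?thesis by (simp add: pairing_def sum_negf)
qed

lemma pairing_self_conj:
  assumes "skew_tensor c"
  shows "pairing c a b u u = 0"
  using pairing_swap_conj[OF assms, of a b u u] by simp

lemma sesquilinear_poly_eq_zero:
  fixes A B C D :: complex
  assumes "\<And>s. A + s * B + cnj s * C + s * cnj s * D = 0"
  shows "A = 0" "B = 0" "C = 0" "D = 0"
proof -
  show A: "A = 0" using assms[of 0] by simp
  have one: "B + C + D = 0" and minus_one: "- B - C + D = 0" and imag: "\<i> * (B - C) + D = 0"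
    using assms[of 1] assms[of "-1"] assms[of \<i>] A by (simp_all add: algebra_simps)
  have "2 * D = (B + C + D) + (- B - C + D)" by simp
  then show D: "D = 0" using one minus_one by simp
  then have "B - C = 0" using imag by simp
  moreover have "B + C = 0" using one D by simp
  ultimately show "B = 0" "C = 0" by (simp_all add: algebra_simps)
qed

definition add_multiple :: "(nat \<Rightarrow> nat \<Rightarrow> complex) \<Rightarrow> nat \<Rightarrow> nat \<Rightarrow> complex \<Rightarrow> nat \<Rightarrow> nat \<Rightarrow> complex" where
  "add_multiple \<omega> k m t = (\<lambda>n i. \<omega> n i + (if n = k then t * \<omega> m i else 0))"

lemma sum_add_multiple:
  assumes "k \<in> {1..4}" "m \<in> {1..4}"
  shows "(\<Sum>n\<in>{1..4}. c n * add_multiple \<omega> k m t n i) =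
    (\<Sum>n\<in>{1..4}. (c n + (if n = m then t * c k else 0)) * \<omega> n i)"
  using assms by (simp add: add_multiple_def distrib_left distrib_right sum.distrib if_distrib[of "(*) _"] mult_ac
    cong: if_cong)

lemma is_basis4_add_multiple:
  assumes "is_basis4 \<omega>" "k \<in> {1..4}" "m \<in> {1..4}" "k \<noteq> m"
  shows "is_basis4 (add_multiple \<omega> k m t)"
  unfolding is_basis4_def
proof (intro conjI allI impI ballI)
  fix c :: "nat \<Rightarrow> complex" and n :: nat
  assume dep: "\<forall>i<4. (\<Sum>n\<in>{1..4}. c n * add_multiple \<omega> k m t n i) = 0" and n: "n \<in> {1..4}"
  define c' where "c' n = c n + (if n = m then t * c k else 0)" for n
  from dep have "\<forall>i<4. (\<Sum>n\<in>{1..4}. c' n * \<omega> n i) = 0"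
    unfolding sum_add_multiple[OF assms(2,3)] c'_def .
  then have zero: "c' n = 0" if "n \<in> {1..4}" for n
    using assms(1)[unfolded is_basis4_def, THEN conjunct1, rule_format, of c'] that by blast
  have "c k = 0" using zero[OF assms(2)] assms(4) by (simp add: c'_def)
  then show "c n = 0" using zero[OF n] by (simp add: c'_def split: if_splits)
next
  fix v :: "nat \<Rightarrow> complex"
  obtain d where d: "\<forall>i<4. v i = (\<Sum>n\<in>{1..4}. d n * \<omega> n i)"
    using assms(1)[unfolded is_basis4_def, THEN conjunct2, rule_format] by blast
  define c where "c n = d n - (if n = m then t * d k else 0)" for n
  have "c n + (if n = m then t * c k else 0) = d n" for n
    using assms(4) by (simp add: c_def)
  then have "\<forall>i<4. v i = (\<Sum>n\<in>{1..4}. c n * add_multiple \<omega> k m t n i)"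
    using d unfolding sum_add_multiple[OF assms(2,3)] by simp
  then show "\<exists>c. \<forall>i<4. v i = (\<Sum>n\<in>{1..4}. c n * add_multiple \<omega> k m t n i)" by blast
qed

definition unit_vec :: "nat \<Rightarrow> nat \<Rightarrow> complex" where
  "unit_vec a = (\<lambda>i. if i = a then 1 else 0)"

definition perm_basis :: "nat \<Rightarrow> nat \<Rightarrow> nat \<Rightarrow> nat \<Rightarrow> nat \<Rightarrow> nat \<Rightarrow> complex" where
  "perm_basis a b c d =
     (\<lambda>n. if n = 1 then unit_vec a else if n = 2 then unit_vec b else if n = 3 then unit_vec c else unit_vec d)"

lemma sum_atLeastAtMost_1_4: "(\<Sum>k\<in>{1..4::nat}. f k) = f 1 + f 2 + f 3 + f 4"
  by (simp add: numeral_eq_Suc add.assoc)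

lemma is_basis4_perm_basis:
  assumes "distinct [a, b, c, d]" "a < 4" "b < 4" "c < 4" "d < 4"
  shows "is_basis4 (perm_basis a b c d)"
  unfolding is_basis4_def
proof (intro conjI allI impI ballI)
  fix x :: "nat \<Rightarrow> complex" and n :: nat
  assume dep: "\<forall>i<4. (\<Sum>n\<in>{1..4}. x n * perm_basis a b c d n i) = 0" and n: "n \<in> {1..4}"
  have "x 1 = 0" using dep[rule_format, of a, unfolded sum_atLeastAtMost_1_4] assms
    by (simp add: perm_basis_def unit_vec_def)
  moreover have "x 2 = 0" using dep[rule_format, of b, unfolded sum_atLeastAtMost_1_4] assms
    by (simp add: perm_basis_def unit_vec_def)
  moreover have "x 3 = 0" using dep[rule_format, of c, unfolded sum_atLeastAtMost_1_4] assms
    by (simp add: perm_basis_def unit_vec_def)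
  moreover have "x 4 = 0" using dep[rule_format, of d, unfolded sum_atLeastAtMost_1_4] assms
    by (simp add: perm_basis_def unit_vec_def)
  moreover have "n = 1 \<or> n = 2 \<or> n = 3 \<or> n = 4" using n by auto
  ultimately show "x n = 0" by auto
next
  fix v :: "nat \<Rightarrow> complex"
  have "{a, b, c, d} = {0..<4}"
  proof (rule card_subset_eq)
    show "card {a, b, c, d} = card {0..<4::nat}" using assms(1) by simp
  qed (use assms in auto)
  then have cases: "i = a \<or> i = b \<or> i = c \<or> i = d" if "i < 4" for i
    using that by (metis atLeast0LessThan insertE lessThan_iff empty_iff)
  define x where "x n = (if n = 1 then v a else if n = 2 then v b else if n = 3 then v c else v d)" for n :: nat
  have "v i = (\<Sum>n\<in>{1..4}. x n * perm_basis a b c d n i)" if "i < 4" for i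
    unfolding sum_atLeastAtMost_1_4 using cases[OF that] assms(1)
    by (elim disjE) (simp_all add: x_def perm_basis_def unit_vec_def)
  then show "\<exists>x. \<forall>i<4. v i = (\<Sum>n\<in>{1..4}. x n * perm_basis a b c d n i)" by blast
qed

lemma sum_unit_vec_mult: "a < n \<Longrightarrow> (\<Sum>i<n. unit_vec a i * f i) = f a"
  by (simp add: unit_vec_def if_distrib[of "\<lambda>x. x * _"] cong: if_cong)

lemma cnj_unit_vec: "cnj (unit_vec a i) = unit_vec a i"
  by (simp add: unit_vec_def)

lemma pairing_unit_vec:
  assumes "i < 4" "j < 4" "k < 4" "l < 4"
  shows "pairing c (unit_vec i) (unit_vec j) (unit_vec k) (unit_vec l) = c i j k l"
  using assms by (simp add: pairing_def cnj_unit_vec sum_unit_vec_mult)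

definition adapted_basis :: "(nat \<Rightarrow> nat \<Rightarrow> nat \<Rightarrow> nat \<Rightarrow> complex) \<Rightarrow> (nat \<Rightarrow> nat \<Rightarrow> complex) \<Rightarrow> bool" where
  "adapted_basis c \<omega> \<longleftrightarrow> is_basis4 \<omega> \<and>
     (\<forall>j\<in>{3, 4::nat}. pairing c (\<omega> 1) (\<omega> 2) (\<omega> 1) (\<omega> j) = 0 \<and> pairing c (\<omega> 1) (\<omega> 2) (\<omega> 2) (\<omega> j) = 0)"

text \<open>By skewness P(a, b; a, a) = P(a, b; b, b) = 0, so p and q are determined independently.\<close>

lemma pairing_eliminate_components:
  assumes "skew_tensor c" and h: "pairing c a b a b \<noteq> 0"
    and "p = cnj (pairing c a b b v / pairing c a b a b)" and "q = cnj (- pairing c a b a v / pairing c a b a b)"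
  shows "pairing c a b a (\<lambda>i. v i + p * a i + q * b i) = 0"
    and "pairing c a b b (\<lambda>i. v i + p * a i + q * b i) = 0"
proof -
  have "pairing c a b b a = - pairing c a b a b"
    using pairing_swap_conj[OF assms(1)] .
  then show "pairing c a b a (\<lambda>i. v i + p * a i + q * b i) = 0"
    and "pairing c a b b (\<lambda>i. v i + p * a i + q * b i) = 0"
    unfolding pairing_add_arg4 pairing_self_conj[OF assms(1)] using h assms(3,4) by simp_all
qed

lemma exists_adapted_basis_of_basis:
  assumes "skew_tensor c" "is_basis4 \<beta>" "pairing c (\<beta> 1) (\<beta> 2) (\<beta> 1) (\<beta> 2) \<noteq> 0"
  shows "\<exists>\<omega>. adapted_basis c \<omega>"
proof -
  define P where "P u v = pairing c (\<beta> 1) (\<beta> 2) u v" for u v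
  define p where "p j = cnj (P (\<beta> 2) (\<beta> j) / P (\<beta> 1) (\<beta> 2))" for j
  define q where "q j = cnj (- P (\<beta> 1) (\<beta> j) / P (\<beta> 1) (\<beta> 2))" for j
  define \<omega> where "\<omega> = add_multiple (add_multiple (add_multiple (add_multiple \<beta>
    3 1 (p 3)) 3 2 (q 3)) 4 1 (p 4)) 4 2 (q 4)"
  have "is_basis4 \<omega>"
    unfolding \<omega>_def by (intro is_basis4_add_multiple assms(2)) auto
  moreover have "\<omega> 1 = \<beta> 1" "\<omega> 2 = \<beta> 2"
    and "\<omega> j = (\<lambda>i. \<beta> j i + p j * \<beta> 1 i + q j * \<beta> 2 i)" if "j \<in> {3, 4}" for j
    using that by (auto simp: \<omega>_def add_multiple_def fun_eq_iff)
  ultimately show ?thesis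
    unfolding adapted_basis_def
    using pairing_eliminate_components[OF assms(1,3) p_def[unfolded P_def] q_def[unfolded P_def]]
    by (intro exI[of _ \<omega>]) auto
qed

definition shear_vec :: "nat \<Rightarrow> nat \<Rightarrow> complex \<Rightarrow> nat \<Rightarrow> complex" where
  "shear_vec a c s = (\<lambda>i. unit_vec a i + s * unit_vec c i)"

lemma tensor_eq_zero_if_pairing_shear_vec_eq_zero:
  assumes zero: "\<And>s t. pairing C (shear_vec a c s) (shear_vec b d t) (shear_vec a c s) (shear_vec b d t) = 0"
    and "a < 4" "b < 4" "c < 4" "d < 4"
    and p: "p \<in> {a, c}" and q: "q \<in> {b, d}" and r: "r \<in> {a, c}" and u: "u \<in> {b, d}"
  shows "C p q r u = 0"
proof -
  define \<Phi> where "\<Phi> t p r = C p b r b + t * C p d r b + cnj t * C p b r d + t * cnj t * C p d r d" for t p r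
  have "pairing C (shear_vec a c s) (shear_vec b d t) (shear_vec a c s) (shear_vec b d t) =
      \<Phi> t a a + s * \<Phi> t c a + cnj s * \<Phi> t a c + s * cnj s * \<Phi> t c c" for s t
    unfolding shear_vec_def pairing_add_arg1 pairing_add_arg2 pairing_add_arg3 pairing_add_arg4
    using assms(2-5) by (simp add: pairing_unit_vec \<Phi>_def algebra_simps)
  then have "\<Phi> t a a + s * \<Phi> t c a + cnj s * \<Phi> t a c + s * cnj s * \<Phi> t c c = 0" for s t
    using zero by simp
  then have "\<Phi> t p r = 0" for t
    using sesquilinear_poly_eq_zero p r by blast
  then have "C p b r b + t * C p d r b + cnj t * C p b r d + t * cnj t * C p d r d = 0" for t
    unfolding \<Phi>_def .
  then show ?thesis
    using sesquilinear_poly_eq_zero q u by blast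
qed

lemma ex_less_notin:
  fixes F :: "nat set"
  assumes "finite F" "card F < n"
  shows "\<exists>x<n. x \<notin> F"
proof (rule ccontr)
  assume "\<not> (\<exists>x<n. x \<notin> F)"
  then have "{..<n} \<subseteq> F" by auto
  then have "card {..<n} \<le> card F" by (rule card_mono[OF assms(1)])
  then show False using assms(2) by simp
qed

lemma ex_distinct4_cover:
  fixes x y z w :: nat
  assumes "x < 4" "y < 4" "z < 4" "w < 4" "x \<noteq> y" "x \<noteq> w" "z \<noteq> y" "z \<noteq> w"
  shows "\<exists>a b c d. distinct [a, b, c, d] \<and> a < 4 \<and> b < 4 \<and> c < 4 \<and> d < 4 \<and>
    x \<in> {a, c} \<and> z \<in> {a, c} \<and> y \<in> {b, d} \<and> w \<in> {b, d}"
proof -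
  obtain c where c: "c < 4" "c \<notin> {x, y, w}" "z \<in> {x, c}"
  proof (cases "z = x")
    case True
    have "card {x, y, w} < 4" by (simp add: card_insert_if)
    then show ?thesis using True that ex_less_notin[of "{x, y, w}"] by blast
  next
    case False
    show ?thesis by (rule that[of z]) (use assms False in auto)
  qed
  obtain d where d: "d < 4" "d \<notin> {x, y, c}" "w \<in> {y, d}"
  proof (cases "w = y")
    case True
    have "card {x, y, c} < 4" by (simp add: card_insert_if)
    then show ?thesis using True that ex_less_notin[of "{x, y, c}"] by blast
  next
    case False
    show ?thesis by (rule that[of w]) (use assms c False in auto)
  qed
  have "distinct [x, y, c, d]" using assms(5) c(2) d(2) by auto
  then show ?thesis using assms(1,2) c d by blast
qed

lemma skew_tensor_eq_zero_if_pairing_shear_vec_eq_zero: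
  assumes skew: "skew_tensor C"
    and zero: "\<And>a b c d s t. distinct [a, b, c, d] \<Longrightarrow> a < 4 \<Longrightarrow> b < 4 \<Longrightarrow> c < 4 \<Longrightarrow> d < 4 \<Longrightarrow>
      pairing C (shear_vec a c s) (shear_vec b d t) (shear_vec a c s) (shear_vec b d t) = 0"
    and "x < 4" "y < 4" "z < 4" "w < 4"
  shows "C x y z w = 0"
proof -
  have separated: "C x y z w = 0"
    if xyzw: "x < 4" "y < 4" "z < 4" "w < 4" "x \<noteq> y" "x \<noteq> w" "z \<noteq> y" "z \<noteq> w" for x y z w
  proof -
    obtain a b c d where "distinct [a, b, c, d]" "a < 4" "b < 4" "c < 4" "d < 4"
      and "x \<in> {a, c}" "z \<in> {a, c}" "y \<in> {b, d}" "w \<in> {b, d}"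
      using ex_distinct4_cover[OF xyzw] by blast
    then show ?thesis
      using tensor_eq_zero_if_pairing_shear_vec_eq_zero[OF zero] by blast
  qed
  have swap_ij: "C i j k l = - C j i k l" and swap_kl: "C i j k l = - C i j l k" for i j k l
    using skew unfolding skew_tensor_def by blast+
  consider "x = y" | "z = w" | "x \<noteq> y" "z \<noteq> w" "x \<noteq> w" "z \<noteq> y" | "x \<noteq> y" "z \<noteq> w" "x = w \<or> z = y"
    by blast
  then show ?thesis
  proof cases
    case 1
    then show ?thesis using swap_ij[of x x z w] by simp
  next
    case 2
    then show ?thesis using swap_kl[of x y z z] by simp
  next
    case 3
    then show ?thesis using separated assms(3-6) by blast
  next
    case 4
    \<comment> \<open>swapping z and w separates the index pairs\<close>
    then have "C x y w z = 0" using separated assms(3-6) by metis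
    then show ?thesis using swap_kl[of x y z w] by simp
  qed
qed

lemma exists_adapted_basis:
  assumes "skew_tensor C"
  shows "\<exists>\<omega>. adapted_basis C \<omega>"
proof (cases "\<exists>a b c d s t. distinct [a, b, c, d] \<and> a < 4 \<and> b < 4 \<and> c < 4 \<and> d < 4 \<and>
    pairing C (shear_vec a c s) (shear_vec b d t) (shear_vec a c s) (shear_vec b d t) \<noteq> 0")
  case True
  then obtain a b c d s t where abcd: "distinct [a, b, c, d]" "a < 4" "b < 4" "c < 4" "d < 4"
    and nonzero: "pairing C (shear_vec a c s) (shear_vec b d t) (shear_vec a c s) (shear_vec b d t) \<noteq> 0"
    by blast
  define \<beta> where "\<beta> = add_multiple (add_multiple (perm_basis a b c d) 1 3 s) 2 4 t"
  have "is_basis4 \<beta>"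
    unfolding \<beta>_def by (intro is_basis4_add_multiple is_basis4_perm_basis abcd) auto
  moreover have "\<beta> 1 = shear_vec a c s" "\<beta> 2 = shear_vec b d t"
    by (simp_all add: \<beta>_def add_multiple_def perm_basis_def shear_vec_def)
  ultimately show ?thesis
    using exists_adapted_basis_of_basis[OF assms, of \<beta>] nonzero by argo
next
  case False
  then have "pairing C (shear_vec a c s) (shear_vec b d t) (shear_vec a c s) (shear_vec b d t) = 0"
    if "distinct [a, b, c, d]" "a < 4" "b < 4" "c < 4" "d < 4" for a b c d s t
    using that by blast
  then have "C i j k l = 0" if "i < 4" "j < 4" "k < 4" "l < 4" for i j k l
    using skew_tensor_eq_zero_if_pairing_shear_vec_eq_zero[OF assms _ that] by blast
  then have "pairing C a b u v = 0" for a b u v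
    by (rule pairing_eq_zero)
  moreover have "is_basis4 (perm_basis 0 1 2 3)"
    by (rule is_basis4_perm_basis) auto
  ultimately show ?thesis
    unfolding adapted_basis_def by blast
qed

theorem lemma6:
  assumes "is_22_form \<alpha>"
  shows "\<exists>\<omega>. is_basis4 \<omega> \<and>
    (\<forall>j\<in>{3, 4::nat}.
       wedge \<alpha> (wedge (form10 (\<omega> 1)) (wedge (form10 (\<omega> 2))
          (wedge (form_conj (\<omega> 1)) (form_conj (\<omega> j))))) = (\<lambda>_. 0) \<and>
       wedge \<alpha> (wedge (form10 (\<omega> 1)) (wedge (form10 (\<omega> 2))
          (wedge (form_conj (\<omega> 2)) (form_conj (\<omega> j))))) = (\<lambda>_. 0))"
proof -
  obtain \<omega> where "adapted_basis (coeff22 \<alpha> {0..<8}) \<omega>"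
    using exists_adapted_basis[OF skew_tensor_coeff22] by blast
  then show ?thesis
    unfolding adapted_basis_def wedge_22_form_form10_form_conj[OF assms]
    by (intro exI[of _ \<omega>]) (simp add: fun_eq_iff)
qed

end
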